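(* Let $q_1,q_2$ be integers with $1\le q_1\le q_2$, $A=\begin{pmatrix}3q_1&0\\0&3q_2\end{pmatrix}$, $\mathcal{D}=\left\{\begin{pmatrix}0\\0\end{pmatrix},\begin{pmatrix}1\\0\end{pmatrix},\begin{pmatrix}0\\1\end{pmatrix}\right\}$, and $\mu_{A,\mathcal{D}}$ the associated Sierpiński-type measure. If $\Lambda$ is an orthogonal set of $\mu_{A,\mathcal{D}}$, then $\Lambda$ has at most one point on every horizontal line and at most one point on every vertical line; i.e., any two distinct points of $\Lambda$ differ in both coordinates.
   Context: $\mu_{A,\mathcal{D}}$ is the unique Borel probability measure on $\mathbb{R}^2$ with $\mu_{A,\mathcal{D}}(E)=\frac13\sum_{d\in\mathcal{D}}\mu_{A,\mathcal{D}}(AE-d)$ for Borel $E$. A countable $\Lambda\subseteq\mathbb{R}^2$ is an orthogonal set of $\mu$ if $\{e^{-2\pi i\langle\lambda,x\rangle}:\lambda\in\Lambda\}$ is orthogonal in $L^2(\mu)$. *)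

theory Defs
  imports "HOL-Probability.Probability"
begin

text \<open>The affine map x \<mapsto> A x - d, so that (\<lambda>x. A x - d) ` E = A E - d.\<close>
definition affine_shift :: "(real \<times> real \<Rightarrow> real \<times> real) \<Rightarrow> real \<times> real \<Rightarrow> real \<times> real \<Rightarrow> real \<times> real"
  where "affine_shift A d x = A x - d"

definition is_self_affine_measure ::
  "(real \<times> real \<Rightarrow> real \<times> real) \<Rightarrow> (real \<times> real) set \<Rightarrow> (real \<times> real) measure \<Rightarrow> bool"
  where "is_self_affine_measure A D M \<longleftrightarrow>
     prob_space M \<and> sets M = sets borel \<and>
     (\<forall>E \<in> sets borel. measure M E =
         (1 / real (card D)) * (\<Sum>d\<in>D. measure M (affine_shift A d ` E)))"

definition self_affine_measure ::
  "(real \<times> real \<Rightarrow> real \<times> real) \<Rightarrow> (real \<times> real) set \<Rightarrow> (real \<times> real) measure"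
  where "self_affine_measure A D = (THE M. is_self_affine_measure A D M)"

definition diagA :: "int \<Rightarrow> int \<Rightarrow> real \<times> real \<Rightarrow> real \<times> real"
  where "diagA q1 q2 x = (3 * of_int q1 * fst x, 3 * of_int q2 * snd x)"

definition sierpD :: "(real \<times> real) set"
  where "sierpD = {(0,0), (1,0), (0,1)}"

definition expo :: "real \<times> real \<Rightarrow> real \<times> real \<Rightarrow> complex"
  where "expo l x = exp (- 2 * complex_of_real pi * \<i> * complex_of_real (l \<bullet> x))"

definition orthogonal_set :: "(real \<times> real) measure \<Rightarrow> (real \<times> real) set \<Rightarrow> bool"
  where "orthogonal_set M \<Lambda> \<longleftrightarrow> countable \<Lambda> \<and>
     (\<forall>l\<in>\<Lambda>. \<forall>l'\<in>\<Lambda>. l \<noteq> l' \<longrightarrow>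
        (LINT x|M. expo l x * cnj (expo l' x)) = 0)"

end

theory Submission
  imports Defs
begin

(* The measure is the invariant measure of the iterated function system of contractions
  x \<mapsto> A\<^sup>-\<^sup>1 (x + d), d \<in> D. Since it is only defined by a definite description, we show that
  such a measure exists (the image of the uniform Bernoulli measure on digit streams under the
  radix-expansion map) and is unique: averaging g over the three branches divides Lipschitz
  constants by 3, so the iterated averages of a bounded Lipschitz g converge pointwise to the
  constant \<integral>g d\<mu>, and bounded Lipschitz functions determine a Borel probability measure.

  If two points of \<Lambda> share their first coordinate, orthogonality says that the Fourier transform
  of the second marginal \<nu> of \<mu> vanishes at some t. But self-affinity gives the refinement
  equation \<nu>^(t) = \<nu>^(t/N) m(t/N) with N = 3 q\<^sub>2 and mask m(s) = (2 + e^(is))/3, which has no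
  zeros; iterating, \<nu>^(t/N^n) = 0 for all n, contradicting \<nu>^(t/N^n) \<longrightarrow> \<nu>^(0) = 1. *)

section \<open>Bounded Lipschitz functions determine Borel probability measures\<close>

lemma borel_measurable_lipschitz:
  "L-lipschitz_on UNIV g \<Longrightarrow> g \<in> borel_measurable borel"
  by (intro borel_measurable_continuous_onI lipschitz_on_continuous_on)

lemma lipschitz_infdist_cutoff:
  "(real m)-lipschitz_on UNIV (\<lambda>x. max 0 (1 - real m * infdist x C))"
proof (rule lipschitz_onI)
  fix x y
  have "\<bar>max 0 u - max 0 v\<bar> \<le> \<bar>u - v\<bar>" for u v :: real
    by (auto simp: max_def)
  then have "\<bar>max 0 (1 - real m * infdist x C) - max 0 (1 - real m * infdist y C)\<bar>
      \<le> \<bar>(1 - real m * infdist x C) - (1 - real m * infdist y C)\<bar>" .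
  also have "\<dots> = real m * \<bar>infdist x C - infdist y C\<bar>"
    by (simp add: abs_mult abs_minus_commute flip: right_diff_distrib)
  also have "\<dots> \<le> real m * dist x y"
    by (intro mult_left_mono infdist_triangle_abs) simp
  finally show "dist (max 0 (1 - real m * infdist x C)) (max 0 (1 - real m * infdist y C))
      \<le> real m * dist x y" by (simp add: dist_real_def)
qed simp

lemma tendsto_integral_infdist_cutoff:
  fixes C :: "'a::metric_space set"
  assumes "prob_space M" and sets_M: "sets M = sets borel" and "closed C" and "C \<noteq> {}"
  shows "(\<lambda>m. \<integral>x. max 0 (1 - real m * infdist x C) \<partial>M) \<longlonglongrightarrow> measure M C"
proof -
  interpret prob_space M by fact
  have "(\<lambda>m. \<integral>x. max 0 (1 - real m * infdist x C) \<partial>M) \<longlonglongrightarrow> (\<integral>x. indicator C x \<partial>M)"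
  proof (rule integral_dominated_convergence[where w="\<lambda>_. 1"])
    show "indicator C \<in> borel_measurable M"
      using \<open>closed C\<close> by (simp add: measurable_cong_sets[OF sets_M refl] borel_closed)
    show "(\<lambda>x. max 0 (1 - real m * infdist x C)) \<in> borel_measurable M" for m
      unfolding measurable_cong_sets[OF sets_M refl]
      by (rule borel_measurable_lipschitz[OF lipschitz_infdist_cutoff])
    show "AE x in M. norm (max 0 (1 - real m * infdist x C)) \<le> 1" for m
      by (intro AE_I2) (simp add: infdist_nonneg)
    show "AE x in M. (\<lambda>m. max 0 (1 - real m * infdist x C)) \<longlonglongrightarrow> indicator C x"
    proof (rule AE_I2)
      fix x
      show "(\<lambda>m. max 0 (1 - real m * infdist x C)) \<longlonglongrightarrow> indicator C x"
      proof (cases "x \<in> C")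
        case False
        then have "infdist x C > 0"
          using assms infdist_pos_not_in_closed by blast
        then have "\<forall>\<^sub>F m in sequentially. max 0 (1 - real m * infdist x C) = 0"
          unfolding eventually_sequentially
        proof (intro exI allI impI)
          fix m assume "nat \<lceil>1 / infdist x C\<rceil> \<le> m"
          then have "1 / infdist x C \<le> real m" by linarith
          with \<open>infdist x C > 0\<close> show "max 0 (1 - real m * infdist x C) = 0"
            by (simp add: field_simps)
        qed
        with False show ?thesis by (simp add: tendsto_eventually)
      qed simp
    qed
  qed simp
  moreover have "space M = UNIV" using sets_M by (metis sets_eq_imp_space_eq space_borel)
  ultimately show ?thesis by simp
qed

lemma measure_eqI_lipschitz:
  fixes M N :: "'a::metric_space measure"
  assumes "prob_space M" "prob_space N" and sets_M: "sets M = sets borel" and sets_N: "sets N = sets borel"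
    and integral_eq: "\<And>(g :: 'a \<Rightarrow> real) L. L-lipschitz_on UNIV g \<Longrightarrow> (\<And>x. \<bar>g x\<bar> \<le> 1)
      \<Longrightarrow> integral\<^sup>L M g = integral\<^sup>L N g"
  shows "M = N"
proof -
  interpret M: prob_space M by fact
  interpret N: prob_space N by fact
  have closed_eq: "emeasure M C = emeasure N C" if "closed C" for C
  proof (cases "C = {}")
    case False
    have "\<bar>max 0 (1 - real m * infdist x C)\<bar> \<le> 1" for m x
      using infdist_nonneg[of x C] by simp
    then have "(\<lambda>m. \<integral>x. max 0 (1 - real m * infdist x C) \<partial>M)
        = (\<lambda>m. \<integral>x. max 0 (1 - real m * infdist x C) \<partial>N)"
      by (intro ext integral_eq[OF lipschitz_infdist_cutoff])
    then have "measure M C = measure N C"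
      using tendsto_integral_infdist_cutoff[OF assms(1) sets_M that False]
        tendsto_integral_infdist_cutoff[OF assms(2) sets_N that False]
      by (metis (no_types) LIMSEQ_unique)
    then show ?thesis
      using M.emeasure_eq_measure N.emeasure_eq_measure by simp
  qed simp
  have borel_closed_generated: "sets borel = sigma_sets UNIV (Collect closed)"
    unfolding borel_eq_closed by (rule sets_measure_of) simp
  show ?thesis
  proof (rule measure_eqI_generator_eq[where E="Collect closed" and \<Omega>=UNIV and A="\<lambda>_. UNIV"])
    show "Int_stable (Collect closed)" by (auto simp: Int_stable_def)
  qed (auto simp: sets_M sets_N borel_closed_generated closed_eq
      prob_space.emeasure_space_1[OF assms(1)])
qed

section \<open>Characteristic functions satisfying a refinement equation\<close>

lemma (in real_distribution) char_nonzero_of_refinement: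
  fixes m :: "real \<Rightarrow> complex"
  assumes "1 < N" and refinement: "\<And>t. char M t = char M (t / N) * m (t / N)"
    and mask_nonzero: "\<And>s. m s \<noteq> 0"
  shows "char M t \<noteq> 0"
proof
  assume "char M t = 0"
  then have vanish: "char M (t / N ^ n) = 0" for n
  proof (induction n)
    case (Suc n)
    then show ?case
      using refinement[of "t / N ^ n"] mask_nonzero by (simp add: mult.commute)
  qed simp
  have "(\<lambda>n. t / N ^ n) \<longlonglongrightarrow> 0"
    using \<open>1 < N\<close> by (rule LIMSEQ_divide_realpow_zero)
  then have "(\<lambda>n. char M (t / N ^ n)) \<longlonglongrightarrow> char M 0"
    by (rule isCont_tendsto_compose[OF isCont_char])
  then show False
    using vanish char_zero by (simp add: LIMSEQ_const_iff)
qed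

section \<open>Invariant measures of finite iterated function systems\<close>

definition ifs_invariant ::
    "'d set \<Rightarrow> ('d \<Rightarrow> 'a \<Rightarrow> 'a) \<Rightarrow> 'a::topological_space measure \<Rightarrow> bool"
  where "ifs_invariant D f M \<longleftrightarrow> prob_space M \<and> sets M = sets borel \<and>
     (\<forall>E \<in> sets borel. measure M E = (\<Sum>d\<in>D. measure M (f d -` E)) / card D)"

lemma ifs_invariantD:
  assumes "ifs_invariant D f M"
  shows "prob_space M" and "sets M = sets borel" and "space M = UNIV"
    and "E \<in> sets borel \<Longrightarrow> measure M E = (\<Sum>d\<in>D. measure M (f d -` E)) / card D"
  using assms unfolding ifs_invariant_def by (auto dest: sets_eq_imp_space_eq)

definition ifs_average :: "'d set \<Rightarrow> ('d \<Rightarrow> 'a \<Rightarrow> 'a) \<Rightarrow> ('a \<Rightarrow> real) \<Rightarrow> 'a \<Rightarrow> real"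
  where "ifs_average D f g x = (\<Sum>d\<in>D. g (f d x)) / card D"

locale finite_ifs =
  fixes D :: "'d set" and f :: "'d \<Rightarrow> 'a::topological_space \<Rightarrow> 'a"
  assumes finite_D: "finite D" and D_nonempty: "D \<noteq> {}"
    and measurable_f: "d \<in> D \<Longrightarrow> f d \<in> borel_measurable borel"
begin

lemma invariant_measurable_f:
  "ifs_invariant D f M \<Longrightarrow> d \<in> D \<Longrightarrow> f d \<in> M \<rightarrow>\<^sub>M borel"
  using measurable_f by (simp add: measurable_cong_sets[OF ifs_invariantD(2) refl])

lemma measurable_pushforward_kernel:
  assumes M: "ifs_invariant D f M"
  shows "(\<lambda>d. distr M borel (f d)) \<in> uniform_count_measure D \<rightarrow>\<^sub>M subprob_algebra borel"
  using ifs_invariantD(1)[OF M]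
  by (auto simp: measurable_cong_sets[OF sets_uniform_count_measure_count_space refl]
      space_uniform_count_measure space_subprob_algebra invariant_measurable_f[OF M]
      intro!: prob_space_imp_subprob_space prob_space.prob_space_distr)

lemma invariant_eq_bind:
  assumes M: "ifs_invariant D f M"
  shows "M = uniform_count_measure D \<bind> (\<lambda>d. distr M borel (f d))"
proof (rule measure_eqI)
  interpret prob_space M using M by (rule ifs_invariantD)
  have sets_M: "sets M = sets borel" and space_M: "space M = UNIV" using M by (rule ifs_invariantD)+
  show "sets M = sets (uniform_count_measure D \<bind> (\<lambda>d. distr M borel (f d)))"
    using D_nonempty by (subst sets_bind) (auto simp: sets_M space_uniform_count_measure)
  fix E assume "E \<in> sets M"
  then have E: "E \<in> sets borel" using sets_M by simp
  have "emeasure (uniform_count_measure D \<bind> (\<lambda>d. distr M borel (f d))) E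
      = (\<integral>\<^sup>+d. emeasure (distr M borel (f d)) E \<partial>uniform_count_measure D)"
    using D_nonempty by (intro emeasure_bind[OF _ measurable_pushforward_kernel[OF M] E])
      (simp add: space_uniform_count_measure)
  also have "\<dots> = (\<Sum>d\<in>D. ennreal (1 / card D) * ennreal (measure M (f d -` E)))"
    using finite_D E
    by (auto simp: uniform_count_measure_def nn_integral_point_measure_finite emeasure_distr
        invariant_measurable_f[OF M] emeasure_eq_measure space_M intro!: sum.cong)
  also have "\<dots> = ennreal ((\<Sum>d\<in>D. measure M (f d -` E)) / card D)"
    by (simp add: sum_divide_distrib ennreal_mult[symmetric] sum_nonneg flip: sum_ennreal)
  also have "\<dots> = emeasure M E"
    using ifs_invariantD(4)[OF M E] by (simp add: emeasure_eq_measure)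
  finally show "emeasure M E = emeasure (uniform_count_measure D \<bind> (\<lambda>d. distr M borel (f d))) E"
    by simp
qed

lemma invariant_integral_real:
  fixes g :: "'a \<Rightarrow> real"
  assumes M: "ifs_invariant D f M"
    and g[measurable]: "g \<in> borel_measurable borel" and bounded: "\<And>x. \<bar>g x\<bar> \<le> B"
  shows "integral\<^sup>L M g = (\<Sum>d\<in>D. \<integral>x. g (f d x) \<partial>M) / card D"
proof -
  have image_prob: "d \<in> D \<Longrightarrow> prob_space (distr M borel (f d))" for d
    using ifs_invariantD(1)[OF M] invariant_measurable_f[OF M] by (rule prob_space.prob_space_distr)
  have "integral\<^sup>L M g = integral\<^sup>L (uniform_count_measure D \<bind> (\<lambda>d. distr M borel (f d))) g"
    by (subst invariant_eq_bind[OF M]) simp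
  also have "\<dots> = \<integral>d. integral\<^sup>L (distr M borel (f d)) g \<partial>uniform_count_measure D"
  proof (rule integral_bind[OF g _ measurable_pushforward_kernel[OF M], where B=B and B'=1])
    show "finite_measure (uniform_count_measure D)"
      using finite_D D_nonempty prob_space_uniform_count_measure prob_space.finite_measure by blast
    show "AE d in uniform_count_measure D.
        emeasure (distr M borel (f d)) (space (distr M borel (f d))) \<le> ennreal 1"
      using image_prob by (intro AE_I2) (simp add: space_uniform_count_measure prob_space.emeasure_le_1)
  qed (simp add: bounded)
  also have "\<dots> = (\<Sum>d\<in>D. \<integral>x. g (f d x) \<partial>M) / card D"
    using finite_D
    by (simp add: integral_uniform_count_measure integral_distr invariant_measurable_f[OF M] cong: sum.cong)
  finally show ?thesis .
qed

lemma invariant_integral_complex: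
  fixes g :: "'a \<Rightarrow> complex"
  assumes M: "ifs_invariant D f M"
    and g[measurable]: "g \<in> borel_measurable borel" and bounded: "\<And>x. norm (g x) \<le> B"
  shows "integral\<^sup>L M g = (\<Sum>d\<in>D. \<integral>x. g (f d x) \<partial>M) / card D"
proof -
  interpret prob_space M using M by (rule ifs_invariantD)
  have sets_M: "sets M = sets borel" using M by (rule ifs_invariantD)
  have integrable_g: "integrable M g"
    using bounded
    by (intro integrable_const_bound[where B=B]) (simp_all add: measurable_cong_sets[OF sets_M refl])
  have integrable_gf: "integrable M (\<lambda>x. g (f d x))" if "d \<in> D" for d
    using bounded invariant_measurable_f[OF M that]
    by (intro integrable_const_bound[where B=B]) (auto intro: measurable_compose[OF _ g])
  have "Re (integral\<^sup>L M g) = Re ((\<Sum>d\<in>D. \<integral>x. g (f d x) \<partial>M) / card D)"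
    using invariant_integral_real[OF M _ order_trans[OF abs_Re_le_cmod bounded], of "\<lambda>x. x"]
      integrable_g integrable_gf by (simp cong: sum.cong)
  moreover have "Im (integral\<^sup>L M g) = Im ((\<Sum>d\<in>D. \<integral>x. g (f d x) \<partial>M) / card D)"
    using invariant_integral_real[OF M _ order_trans[OF abs_Im_le_cmod bounded], of "\<lambda>x. x"]
      integrable_g integrable_gf by (simp cong: sum.cong)
  ultimately show ?thesis by (rule complex_eqI)
qed

lemma ifs_average_bounded:
  assumes "\<And>x. \<bar>g x\<bar> \<le> B"
  shows "\<bar>ifs_average D f g x\<bar> \<le> B"
proof -
  have "\<bar>\<Sum>d\<in>D. g (f d x)\<bar> \<le> (\<Sum>d\<in>D. B)"
    using assms by (intro order_trans[OF sum_abs] sum_mono) auto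
  moreover have "card D > 0" using finite_D D_nonempty by (simp add: card_gt_0_iff)
  ultimately show ?thesis
    by (simp add: ifs_average_def pos_divide_le_eq) (simp add: mult.commute)
qed

lemma integral_ifs_average:
  fixes g :: "'a \<Rightarrow> real"
  assumes M: "ifs_invariant D f M"
    and g[measurable]: "g \<in> borel_measurable borel" and bounded: "\<And>x. \<bar>g x\<bar> \<le> B"
  shows "integral\<^sup>L M (ifs_average D f g) = integral\<^sup>L M g"
proof -
  interpret prob_space M using M by (rule ifs_invariantD)
  have "integrable M (\<lambda>x. g (f d x))" if "d \<in> D" for d
    using bounded invariant_measurable_f[OF M that]
    by (intro integrable_const_bound[where B=B]) (auto intro: measurable_compose[OF _ g])
  then show ?thesis
    unfolding ifs_average_def by (simp add: invariant_integral_real[OF M g bounded])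
qed

lemma char_marginal_refinement:
  assumes M: "ifs_invariant D f M" and sel[measurable]: "sel \<in> borel_measurable borel"
    and scaling: "\<And>d x. d \<in> D \<Longrightarrow> sel (f d x) = (sel x + b d) / N"
  shows "char (distr M borel sel) t
    = char (distr M borel sel) (t / N) * ((\<Sum>d\<in>D. iexp (t / N * b d)) / card D)"
proof -
  have sel_M: "sel \<in> M \<rightarrow>\<^sub>M borel"
    using sel by (simp add: measurable_cong_sets[OF ifs_invariantD(2)[OF M] refl])
  have char_eq: "char (distr M borel sel) s = (CLINT x|M. iexp (s * sel x))" for s
    by (simp add: char_def integral_distr[OF sel_M])
  have iexp_split: "iexp (t * ((u + v) / N)) = iexp (t / N * u) * iexp (t / N * v)" for u v
  proof -
    have "t * ((u + v) / N) = t / N * u + t / N * v" by (simp add: add_divide_distrib distrib_left)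
    then show ?thesis by (simp only: of_real_add distrib_left exp_add)
  qed
  have "char (distr M borel sel) t = (\<Sum>d\<in>D. CLINT x|M. iexp (t * sel (f d x))) / card D"
    unfolding char_eq by (rule invariant_integral_complex[OF M _, where B=1]) simp_all
  also have "\<dots> = (\<Sum>d\<in>D. CLINT x|M. iexp (t / N * sel x) * iexp (t / N * b d)) / card D"
    by (intro arg_cong[where f="\<lambda>z. z / _"] sum.cong refl) (simp only: scaling iexp_split)
  also have "\<dots> = (\<Sum>d\<in>D. char (distr M borel sel) (t / N) * iexp (t / N * b d)) / card D"
    by (simp only: char_eq integral_mult_left_zero)
  finally show ?thesis
    by (simp add: sum_distrib_left)
qed

lemma fourier_marginal_nonzero:
  assumes M: "ifs_invariant D f M" and sel: "sel \<in> borel_measurable borel" and "1 < N"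
    and scaling: "\<And>d x. d \<in> D \<Longrightarrow> sel (f d x) = (sel x + b d) / N"
    and mask_nonzero: "\<And>s. (\<Sum>d\<in>D. iexp (s * b d)) \<noteq> 0"
  shows "(CLINT x|M. iexp (t * sel x)) \<noteq> 0"
proof -
  interpret prob_space M using M by (rule ifs_invariantD)
  have sel_M: "sel \<in> M \<rightarrow>\<^sub>M borel"
    using sel by (simp add: measurable_cong_sets[OF ifs_invariantD(2)[OF M] refl])
  interpret marginal: real_distribution "distr M borel sel"
    using sel_M by (rule real_distribution_distr)
  have refinement: "char (distr M borel sel) u
      = char (distr M borel sel) (u / N) * ((\<Sum>d\<in>D. iexp (u / N * b d)) / card D)" for u
    using M sel scaling by (rule char_marginal_refinement)
  have "(\<Sum>d\<in>D. iexp (s * b d)) / card D \<noteq> 0" for s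
    using mask_nonzero[of s] finite_D D_nonempty by (simp add: card_eq_0_iff)
  with \<open>1 < N\<close> refinement have "char (distr M borel sel) t \<noteq> 0"
    by (rule marginal.char_nonzero_of_refinement)
  then show ?thesis
    by (simp add: char_def integral_distr[OF sel_M])
qed

end

locale contracting_ifs =
  fixes D :: "'d set" and f :: "'d \<Rightarrow> 'a::metric_space \<Rightarrow> 'a" and c :: real
  assumes finite_index: "finite D" and nonempty_index: "D \<noteq> {}"
    and contraction_factor: "c < 1"
    and lipschitz_f: "d \<in> D \<Longrightarrow> c-lipschitz_on UNIV (f d)"

sublocale contracting_ifs \<subseteq> finite_ifs
  using finite_index nonempty_index lipschitz_f
  by unfold_locales (auto intro: borel_measurable_lipschitz)

context contracting_ifs
begin

lemma contraction_factor_nonneg: "0 \<le> c"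
  using lipschitz_f nonempty_index lipschitz_on_nonneg by blast

lemma lipschitz_ifs_average:
  assumes g: "L-lipschitz_on UNIV g"
  shows "(c * L)-lipschitz_on UNIV (ifs_average D f g)"
proof (rule lipschitz_onI)
  show "0 \<le> c * L" using contraction_factor_nonneg lipschitz_on_nonneg[OF g] by simp
  fix x y
  have "dist (g (f d x)) (g (f d y)) \<le> c * L * dist x y" if "d \<in> D" for d
    using lipschitz_onD[OF lipschitz_on_compose2[OF lipschitz_f[OF that] lipschitz_on_subset[OF g]]]
    by (simp add: mult.commute)
  then have "\<bar>\<Sum>d\<in>D. g (f d x) - g (f d y)\<bar> \<le> (\<Sum>d\<in>D. c * L * dist x y)"
    by (intro order_trans[OF sum_abs] sum_mono) (simp add: dist_real_def)
  moreover have "card D > 0" using finite_index nonempty_index by (simp add: card_gt_0_iff)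
  ultimately show "dist (ifs_average D f g x) (ifs_average D f g y) \<le> c * L * dist x y"
    by (simp add: ifs_average_def dist_real_def sum_subtractf pos_divide_le_eq
        flip: diff_divide_distrib)
      (simp add: mult.commute)
qed

lemma lipschitz_iterated_average:
  "L-lipschitz_on UNIV g \<Longrightarrow> (c ^ n * L)-lipschitz_on UNIV ((ifs_average D f ^^ n) g)"
proof (induction n)
  case (Suc n)
  then show ?case using lipschitz_ifs_average by (simp add: mult.assoc)
qed simp

lemma iterated_average_bounded:
  "(\<And>x. \<bar>g x\<bar> \<le> B) \<Longrightarrow> \<bar>(ifs_average D f ^^ n) g x\<bar> \<le> B"
  by (induction n arbitrary: x) (simp_all add: ifs_average_bounded)

lemma tendsto_iterated_average_oscillation:
  assumes "L-lipschitz_on UNIV g"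
  shows "(\<lambda>n. (ifs_average D f ^^ n) g x - (ifs_average D f ^^ n) g y) \<longlonglongrightarrow> 0"
proof -
  have "(\<lambda>n. c ^ n) \<longlonglongrightarrow> 0"
    using contraction_factor contraction_factor_nonneg by (intro LIMSEQ_power_zero) simp
  then have bound_tendsto: "(\<lambda>n. c ^ n * (L * dist x y)) \<longlonglongrightarrow> 0"
    by (rule tendsto_mult_left_zero)
  have "\<forall>n. norm ((ifs_average D f ^^ n) g x - (ifs_average D f ^^ n) g y) \<le> c ^ n * (L * dist x y)"
    using lipschitz_onD[OF lipschitz_iterated_average[OF assms]] by (simp add: dist_real_def mult.assoc)
  then show ?thesis
    by (intro Lim_null_comparison[OF always_eventually bound_tendsto])
qed

lemma integral_iterated_average:
  fixes g :: "'a \<Rightarrow> real"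
  assumes M: "ifs_invariant D f M" and g: "L-lipschitz_on UNIV g"
    and bounded: "\<And>x. \<bar>g x\<bar> \<le> B"
  shows "integral\<^sup>L M ((ifs_average D f ^^ n) g) = integral\<^sup>L M g"
proof (induction n)
  case (Suc n)
  have "(ifs_average D f ^^ n) g \<in> borel_measurable borel"
    using lipschitz_iterated_average[OF g] by (rule borel_measurable_lipschitz)
  with Suc show ?case
    using integral_ifs_average[OF M _ iterated_average_bounded[OF bounded]] by simp
qed simp

lemma tendsto_iterated_average:
  fixes g :: "'a \<Rightarrow> real"
  assumes M: "ifs_invariant D f M" and g: "L-lipschitz_on UNIV g"
    and bounded: "\<And>x. \<bar>g x\<bar> \<le> B"
  shows "(\<lambda>n. (ifs_average D f ^^ n) g x0) \<longlonglongrightarrow> integral\<^sup>L M g"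
proof -
  interpret prob_space M using M by (rule ifs_invariantD)
  have sets_M: "sets M = sets borel" using M by (rule ifs_invariantD)
  define h where "h n = (ifs_average D f ^^ n) g" for n
  have h_bounded: "\<bar>h n x\<bar> \<le> B" for n x
    unfolding h_def using bounded by (rule iterated_average_bounded)
  have h_M: "h n \<in> borel_measurable M" for n
    unfolding h_def measurable_cong_sets[OF sets_M refl]
    using lipschitz_iterated_average[OF g] by (rule borel_measurable_lipschitz)
  have "(\<lambda>n. \<integral>x. h n x - h n x0 \<partial>M) \<longlonglongrightarrow> (\<integral>x. 0 \<partial>M)"
  proof (rule integral_dominated_convergence[where w="\<lambda>_. 2 * B"])
    show "AE x in M. norm (h n x - h n x0) \<le> 2 * B" for n
    proof (rule AE_I2)
      fix x
      show "norm (h n x - h n x0) \<le> 2 * B"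
        using h_bounded[of n x] h_bounded[of n x0] by simp
    qed
    show "AE x in M. (\<lambda>n. h n x - h n x0) \<longlonglongrightarrow> 0"
      unfolding h_def using g by (intro AE_I2 tendsto_iterated_average_oscillation)
  qed (use h_M in simp_all)
  moreover have "(\<integral>x. h n x - h n x0 \<partial>M) = integral\<^sup>L M g - h n x0" for n
  proof -
    have "integrable M (h n)"
      using h_bounded by (intro integrable_const_bound[OF _ h_M, where B=B]) simp
    then show ?thesis
      using integral_iterated_average[OF M g bounded, of n] by (simp add: h_def prob_space)
  qed
  ultimately have "(\<lambda>n. integral\<^sup>L M g - (integral\<^sup>L M g - h n x0)) \<longlonglongrightarrow> integral\<^sup>L M g - 0"
    by (intro tendsto_diff tendsto_const) simp
  then show ?thesis by (simp add: h_def)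
qed

lemma invariant_unique:
  assumes M: "ifs_invariant D f M" and N: "ifs_invariant D f N"
  shows "M = N"
proof (rule measure_eqI_lipschitz)
  show "integral\<^sup>L M g = integral\<^sup>L N g"
    if "L-lipschitz_on UNIV g" and "\<And>x. \<bar>g x\<bar> \<le> 1" for g :: "'a \<Rightarrow> real" and L
    using tendsto_iterated_average[OF M that] tendsto_iterated_average[OF N that]
    by (rule LIMSEQ_unique)
qed (simp_all add: ifs_invariantD(1,2)[OF M] ifs_invariantD(1,2)[OF N])

end

section \<open>Diagonal self-affine systems in the plane\<close>

definition diag_branch :: "real \<Rightarrow> real \<Rightarrow> real \<times> real \<Rightarrow> real \<times> real \<Rightarrow> real \<times> real"
  where "diag_branch N1 N2 d x = ((fst x + fst d) / N1, (snd x + snd d) / N2)"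

lemma borel_measurable_diag_branch: "diag_branch N1 N2 d \<in> borel_measurable borel"
  unfolding diag_branch_def divide_inverse
  by (intro borel_measurable_continuous_onI continuous_intros)

lemma lipschitz_diag_branch:
  assumes "0 < N" "N \<le> N1" "N \<le> N2"
  shows "(1 / N)-lipschitz_on UNIV (diag_branch N1 N2 d)"
proof (rule lipschitz_onI)
  fix x y :: "real \<times> real"
  have shrink: "dist ((u + e) / N') ((v + e) / N') \<le> dist u v / N" if "N \<le> N'" for u v e N'
  proof -
    have "dist ((u + e) / N') ((v + e) / N') = dist u v / N'"
      using assms(1) that by (simp add: dist_real_def flip: diff_divide_distrib)
    also have "\<dots> \<le> dist u v / N"
      using assms(1) that by (intro divide_left_mono) auto
    finally show ?thesis .
  qed
  have "dist (diag_branch N1 N2 d x) (diag_branch N1 N2 d y)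
      \<le> sqrt ((dist (fst x) (fst y) / N)\<^sup>2 + (dist (snd x) (snd y) / N)\<^sup>2)"
    unfolding diag_branch_def dist_Pair_Pair
    using shrink[OF assms(2)] shrink[OF assms(3)]
    by (intro real_sqrt_le_mono add_mono power_mono) auto
  also have "\<dots> = 1 / N * dist x y"
    using assms(1) by (simp add: dist_prod_def power_divide real_sqrt_divide flip: add_divide_distrib)
  finally show "dist (diag_branch N1 N2 d x) (diag_branch N1 N2 d y) \<le> 1 / N * dist x y" .
qed (use assms in simp)

definition radix_expansion :: "real \<Rightarrow> (nat \<Rightarrow> real) \<Rightarrow> real"
  where "radix_expansion N a = (\<Sum>k. a k / N ^ Suc k)"

lemma summable_radix_expansion:
  fixes a :: "nat \<Rightarrow> real"
  assumes "1 < N" and "\<And>k. \<bar>a k\<bar> \<le> B"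
  shows "summable (\<lambda>k. a k / N ^ Suc k)"
proof (rule summable_comparison_test')
  show "summable (\<lambda>k. B * (1 / N) ^ k)"
    using assms(1) by (intro summable_mult summable_geometric) simp
  show "norm (a k / N ^ Suc k) \<le> B * (1 / N) ^ k" for k
  proof -
    have "norm (a k / N ^ Suc k) \<le> B / N ^ Suc k"
      using assms by (simp add: divide_right_mono)
    also have "\<dots> \<le> B / N ^ k"
      using assms order_trans[OF abs_ge_zero assms(2)] by (intro divide_left_mono power_increasing) auto
    finally show ?thesis by (simp add: power_one_over)
  qed
qed

lemma radix_expansion_step:
  assumes "1 < N" and "\<And>k. \<bar>a k\<bar> \<le> B"
  shows "radix_expansion N a = (a 0 + radix_expansion N (\<lambda>k. a (Suc k))) / N"
proof -
  have "radix_expansion N (\<lambda>k. a (Suc k)) / N = (\<Sum>k. a (Suc k) / N ^ Suc k / N)"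
    unfolding radix_expansion_def
    using suminf_divide[OF summable_radix_expansion[OF assms(1) assms(2)[of "Suc k" for k]]] by simp
  also have "\<dots> = (\<Sum>k. a (Suc k) / N ^ Suc (Suc k))"
    by (simp add: mult.commute)
  also have "\<dots> = radix_expansion N a - a 0 / N"
    unfolding radix_expansion_def using summable_radix_expansion[OF assms] by (subst suminf_split_head) auto
  finally show ?thesis by (simp add: add_divide_distrib)
qed

(* The series converge for streams with digits in a finite set, which is all that matters:
  such streams form the space of the stream measure to which the map is applied. *)
definition diag_coding :: "real \<Rightarrow> real \<Rightarrow> (real \<times> real) stream \<Rightarrow> real \<times> real"
  where "diag_coding N1 N2 s =
    (radix_expansion N1 (\<lambda>k. fst (s !! k)), radix_expansion N2 (\<lambda>k. snd (s !! k)))"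

lemma diag_coding_SCons:
  assumes "1 < N1" "1 < N2" "finite D" "d ## s \<in> streams D"
  shows "diag_coding N1 N2 (d ## s) = diag_branch N1 N2 d (diag_coding N1 N2 s)"
proof -
  obtain B where B: "\<And>p. p \<in> D \<Longrightarrow> norm p \<le> B"
    using finite_imp_bounded[OF assms(3)] by (auto simp: bounded_iff)
  have digit: "(d ## s) !! k \<in> D" for k
    using assms(4) by (rule snth_in)
  have "\<bar>fst p\<bar> \<le> norm p" "\<bar>snd p\<bar> \<le> norm p" for p :: "real \<times> real"
    using norm_fst_le[of "fst p" "snd p"] norm_snd_le[of "snd p" "fst p"] by simp_all
  then have fst_bounded: "\<bar>fst ((d ## s) !! k)\<bar> \<le> B"
    and snd_bounded: "\<bar>snd ((d ## s) !! k)\<bar> \<le> B" for k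
    using B[OF digit[of k]] by (blast intro: order_trans)+
  have "radix_expansion N1 (\<lambda>k. fst ((d ## s) !! k))
      = (fst d + radix_expansion N1 (\<lambda>k. fst (s !! k))) / N1"
    using radix_expansion_step[OF assms(1) fst_bounded] by simp
  moreover have "radix_expansion N2 (\<lambda>k. snd ((d ## s) !! k))
      = (snd d + radix_expansion N2 (\<lambda>k. snd (s !! k))) / N2"
    using radix_expansion_step[OF assms(2) snd_bounded] by simp
  ultimately show ?thesis
    unfolding diag_coding_def diag_branch_def by (simp add: add.commute)
qed

lemma measurable_diag_coding:
  "diag_coding N1 N2 \<in> stream_space (uniform_count_measure D) \<rightarrow>\<^sub>M borel"
proof -
  have "(\<lambda>s. h (s !! k)) \<in> borel_measurable (stream_space (uniform_count_measure D))"
    for h :: "real \<times> real \<Rightarrow> real" and k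
    by (rule measurable_compose[OF measurable_snth])
      (simp add: measurable_cong_sets[OF sets_uniform_count_measure_count_space refl])
  then show ?thesis
    unfolding diag_coding_def radix_expansion_def
    by (intro borel_measurable_Pair borel_measurable_suminf)
qed

definition diag_coding_measure :: "(real \<times> real) set \<Rightarrow> real \<Rightarrow> real \<Rightarrow> (real \<times> real) measure"
  where "diag_coding_measure D N1 N2 =
    distr (stream_space (uniform_count_measure D)) borel (diag_coding N1 N2)"

lemma prob_space_diag_coding_measure:
  "finite D \<Longrightarrow> D \<noteq> {} \<Longrightarrow> prob_space (diag_coding_measure D N1 N2)"
  unfolding diag_coding_measure_def
  by (intro prob_space.prob_space_distr prob_space.prob_space_stream_space
      prob_space_uniform_count_measure measurable_diag_coding)

lemma emeasure_diag_coding_measure: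
  fixes D :: "(real \<times> real) set"
  assumes "finite D" "D \<noteq> {}" "1 < N1" "1 < N2" and E: "E \<in> sets borel"
  shows "emeasure (diag_coding_measure D N1 N2) E = (\<Sum>d\<in>D. ennreal (1 / card D)
    * emeasure (diag_coding_measure D N1 N2) (diag_branch N1 N2 d -` E))"
proof -
  let ?U = "uniform_count_measure D"
  let ?S = "stream_space ?U"
  interpret U: prob_space ?U using assms(1,2) by (rule prob_space_uniform_count_measure)
  have emeasure_eq: "emeasure (diag_coding_measure D N1 N2) A
      = (\<integral>\<^sup>+s. indicator A (diag_coding N1 N2 s) \<partial>?S)" if "A \<in> sets borel" for A
    using that measurable_diag_coding
    by (simp add: diag_coding_measure_def nn_integral_distr flip: nn_integral_indicator)
  have "emeasure (diag_coding_measure D N1 N2) E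
      = (\<integral>\<^sup>+d. (\<integral>\<^sup>+s. indicator E (diag_coding N1 N2 (d ## s)) \<partial>?S) \<partial>?U)"
    unfolding emeasure_eq[OF E]
    using measurable_compose[OF measurable_diag_coding borel_measurable_indicator[OF E]]
    by (rule U.nn_integral_stream_space)
  also have "\<dots> = (\<Sum>d\<in>D. ennreal (1 / card D)
      * (\<integral>\<^sup>+s. indicator E (diag_coding N1 N2 (d ## s)) \<partial>?S))"
    using assms(1) by (simp add: uniform_count_measure_def nn_integral_point_measure_finite)
  also have "\<dots> = (\<Sum>d\<in>D. ennreal (1 / card D)
      * (\<integral>\<^sup>+s. indicator (diag_branch N1 N2 d -` E) (diag_coding N1 N2 s) \<partial>?S))"
    using assms(1-4)
    by (intro sum.cong refl arg_cong[where f="\<lambda>z. _ * z"] nn_integral_cong)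
      (simp add: space_stream_space space_uniform_count_measure diag_coding_SCons indicator_def)
  also have "\<dots> = (\<Sum>d\<in>D. ennreal (1 / card D)
      * emeasure (diag_coding_measure D N1 N2) (diag_branch N1 N2 d -` E))"
    using measurable_sets[OF borel_measurable_diag_branch E] by (simp add: emeasure_eq)
  finally show ?thesis .
qed

lemma ifs_invariant_diag_coding_measure:
  fixes D :: "(real \<times> real) set"
  assumes "finite D" "D \<noteq> {}" "1 < N1" "1 < N2"
  shows "ifs_invariant D (diag_branch N1 N2) (diag_coding_measure D N1 N2)"
proof -
  interpret prob_space "diag_coding_measure D N1 N2"
    using assms(1,2) by (rule prob_space_diag_coding_measure)
  have "ennreal (measure (diag_coding_measure D N1 N2) E)
      = ennreal ((\<Sum>d\<in>D. measure (diag_coding_measure D N1 N2) (diag_branch N1 N2 d -` E)) / card D)"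
    if "E \<in> sets borel" for E
    using emeasure_diag_coding_measure[OF assms that]
    by (simp add: emeasure_eq_measure sum_divide_distrib ennreal_mult[symmetric] flip: sum_ennreal)
  moreover have "sets (diag_coding_measure D N1 N2) = sets borel"
    by (simp add: diag_coding_measure_def)
  ultimately show ?thesis
    unfolding ifs_invariant_def using prob_space_axioms by (simp add: emeasure_eq_measure sum_nonneg)
qed

section \<open>The Sierpinski-type measure\<close>

lemma affine_shift_diagA_image:
  assumes "q1 \<noteq> 0" "q2 \<noteq> 0"
  shows "affine_shift (diagA q1 q2) d ` E = diag_branch (3 * of_int q1) (3 * of_int q2) d -` E"
proof -
  have left_inverse: "diag_branch (3 * of_int q1) (3 * of_int q2) d (affine_shift (diagA q1 q2) d x) = x"
    and right_inverse: "affine_shift (diagA q1 q2) d (diag_branch (3 * of_int q1) (3 * of_int q2) d x) = x"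
    for x using assms by (simp_all add: diag_branch_def affine_shift_def diagA_def prod_eq_iff)
  show ?thesis
  proof (intro set_eqI iffI)
    fix y assume "y \<in> affine_shift (diagA q1 q2) d ` E"
    then show "y \<in> diag_branch (3 * of_int q1) (3 * of_int q2) d -` E"
      using left_inverse by auto
  next
    fix y assume "y \<in> diag_branch (3 * of_int q1) (3 * of_int q2) d -` E"
    then show "y \<in> affine_shift (diagA q1 q2) d ` E"
      using image_eqI[where f="affine_shift (diagA q1 q2) d", OF right_inverse[of y, symmetric]] by simp
  qed
qed

lemma is_self_affine_measure_diagA_iff:
  assumes "q1 \<noteq> 0" "q2 \<noteq> 0"
  shows "is_self_affine_measure (diagA q1 q2) D M
    \<longleftrightarrow> ifs_invariant D (diag_branch (3 * of_int q1) (3 * of_int q2)) M"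
  unfolding is_self_affine_measure_def ifs_invariant_def affine_shift_diagA_image[OF assms] by simp

lemma self_affine_measure_diagA:
  assumes "finite D" "D \<noteq> {}" "1 \<le> q1" "1 \<le> q2"
  shows "ifs_invariant D (diag_branch (3 * of_int q1) (3 * of_int q2)) (self_affine_measure (diagA q1 q2) D)"
proof -
  interpret contracting_ifs D "diag_branch (3 * of_int q1) (3 * of_int q2)" "1 / 3"
    using assms by unfold_locales (auto intro: lipschitz_diag_branch)
  have "ifs_invariant D (diag_branch (3 * of_int q1) (3 * of_int q2))
      (diag_coding_measure D (3 * of_int q1) (3 * of_int q2))"
    using assms by (intro ifs_invariant_diag_coding_measure) auto
  then have "\<exists>!M. is_self_affine_measure (diagA q1 q2) D M"
    using invariant_unique assms(3,4) by (auto simp: is_self_affine_measure_diagA_iff)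
  then have "is_self_affine_measure (diagA q1 q2) D (self_affine_measure (diagA q1 q2) D)"
    unfolding self_affine_measure_def by (rule theI')
  then show ?thesis
    using assms(3,4) by (simp add: is_self_affine_measure_diagA_iff)
qed

lemma sierpinski_marginal_fourier_nonzero:
  assumes M: "ifs_invariant sierpD (diag_branch N1 N2) M" and "1 < N1" "1 < N2"
  shows "(CLINT x|M. iexp (t * fst x)) \<noteq> 0" and "(CLINT x|M. iexp (t * snd x)) \<noteq> 0"
proof -
  interpret finite_ifs sierpD "diag_branch N1 N2"
    by unfold_locales (auto simp: sierpD_def borel_measurable_diag_branch)
  have coordinates_borel: "fst \<in> borel_measurable borel" "snd \<in> borel_measurable borel"
    by (intro borel_measurable_continuous_onI continuous_intros)+
  have "2 + iexp s \<noteq> 0" for s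
  proof
    assume "2 + iexp s = 0"
    then have "norm (iexp s) = 2" by (simp add: add_eq_0_iff)
    then show False by simp
  qed
  then have mask_fst: "(\<Sum>d\<in>sierpD. iexp (s * fst d)) \<noteq> 0"
    and mask_snd: "(\<Sum>d\<in>sierpD. iexp (s * snd d)) \<noteq> 0" for s
    by (simp_all add: sierpD_def add.commute)
  show "(CLINT x|M. iexp (t * fst x)) \<noteq> 0"
    using M coordinates_borel(1) \<open>1 < N1\<close> _ mask_fst
    by (rule fourier_marginal_nonzero) (simp add: diag_branch_def)
  show "(CLINT x|M. iexp (t * snd x)) \<noteq> 0"
    using M coordinates_borel(2) \<open>1 < N2\<close> _ mask_snd
    by (rule fourier_marginal_nonzero) (simp add: diag_branch_def)
qed

lemma expo_mult_cnj: "expo l x * cnj (expo l' x) = iexp (- 2 * pi * ((l - l') \<bullet> x))"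
  unfolding expo_def by (simp add: exp_cnj algebra_simps flip: exp_add)

theorem proposition4p1:
  fixes q1 q2 :: int and \<Lambda> :: "(real \<times> real) set"
  assumes "1 \<le> q1" and "q1 \<le> q2"
    and "orthogonal_set (self_affine_measure (diagA q1 q2) sierpD) \<Lambda>"
  shows "\<forall>l\<in>\<Lambda>. \<forall>l'\<in>\<Lambda>. l \<noteq> l' \<longrightarrow> fst l \<noteq> fst l' \<and> snd l \<noteq> snd l'"
proof (intro ballI impI)
  fix l l' assume "l \<in> \<Lambda>" "l' \<in> \<Lambda>" "l \<noteq> l'"
  let ?M = "self_affine_measure (diagA q1 q2) sierpD"
  have M: "ifs_invariant sierpD (diag_branch (3 * of_int q1) (3 * of_int q2)) ?M"
    using assms(1,2) by (intro self_affine_measure_diagA) (auto simp: sierpD_def)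
  have N: "1 < 3 * real_of_int q1" "1 < 3 * real_of_int q2"
    using assms(1,2) by linarith+
  have orth: "(CLINT x|?M. iexp (- 2 * pi * ((l - l') \<bullet> x))) = 0"
    using assms(3) \<open>l \<in> \<Lambda>\<close> \<open>l' \<in> \<Lambda>\<close> \<open>l \<noteq> l'\<close>
    by (simp add: orthogonal_set_def expo_mult_cnj)
  show "fst l \<noteq> fst l' \<and> snd l \<noteq> snd l'"
  proof (intro conjI notI)
    assume "fst l = fst l'"
    then have "(CLINT x|?M. iexp ((- 2 * pi * (snd l - snd l')) * snd x)) = 0"
      using orth by (simp add: inner_prod_def mult.assoc)
    then show False using sierpinski_marginal_fourier_nonzero(2)[OF M N] by blast
  next
    assume "snd l = snd l'"
    then have "(CLINT x|?M. iexp ((- 2 * pi * (fst l - fst l')) * fst x)) = 0"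
      using orth by (simp add: inner_prod_def mult.assoc)
    then show False using sierpinski_marginal_fourier_nonzero(1)[OF M N] by blast
  qed
qed

end
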